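(* Let $T\subset\mathbb{R}^2$ be an isosceles triangle with apex $A$, height $h$ (Euclidean distance from $A$ to the base), and let $x_0$ be the point on the axis of symmetry of $T$ at Euclidean distance $h_2$ from $A$, where $0<h_2<h$. Then $$\pi_{T,x_0}=\frac12\left(\frac{4h}{h_2}+\frac{h}{h-h_2}\right).$$ Consequently $\pi_{T,x_0}\to\infty$ as $h_2\to0^+$ or $h_2\to h^-$, $\pi_{T,x_0}$ is strictly decreasing for $0<h_2<2h/3$ and strictly increasing for $2h/3<h_2<h$, and its minimum value is $\pi_{T,x_0}=9/2$, attained exactly at $h_2=2h/3$ (the centroid), independently of the side lengths of $T$.
   Context: For a convex set $B\subset\mathbb{R}^2$ and an interior point $x_0$, $\|x\|_{B,x_0}:=\inf\{\xi>0 : x\in \xi(B-x_0)\}$. For a convex polygon $B$ with vertices $p_0,\dots,p_n=p_0$ in counterclockwise order, $\pi_{B,x_0}:=\frac12\sum_{i=1}^n\|p_i-p_{i-1}\|_{B,x_0}$ (half of the perimeter of $B$ measured by its own offset functional; when $B$ is symmetric about a line through $x_0$ this equals the clockwise value). *)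

theory Defs
  imports "HOL-Analysis.Analysis"
begin

definition gauge_fun :: "(real^2) set \<Rightarrow> real^2 \<Rightarrow> real^2 \<Rightarrow> real" where
  "gauge_fun B x0 x = Inf {\<xi>. \<xi> > 0 \<and> x \<in> (\<lambda>y. \<xi> *\<^sub>R (y - x0)) ` B}"

text \<open>Half perimeter of a convex polygon with vertices p 0, ..., p n = p 0 (counterclockwise),
  measured with its own offset functional.\<close>
definition polygon_pi :: "(real^2) set \<Rightarrow> real^2 \<Rightarrow> (nat \<Rightarrow> real^2) \<Rightarrow> nat \<Rightarrow> real" where
  "polygon_pi B x0 p n = (1/2) * (\<Sum>i=1..n. gauge_fun B x0 (p i - p (i - 1)))"

definition tri_vertices :: "real^2 \<Rightarrow> real^2 \<Rightarrow> real^2 \<Rightarrow> nat \<Rightarrow> real^2" where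
  "tri_vertices a b c i = (if i mod 3 = 0 then a else if i mod 3 = 1 then b else c)"

text \<open>Twice the signed area; positive iff a, b, c are in counterclockwise order.\<close>
definition orient :: "real^2 \<Rightarrow> real^2 \<Rightarrow> real^2 \<Rightarrow> real" where
  "orient a b c = (b - a)$1 * (c - a)$2 - (b - a)$2 * (c - a)$1"

end

theory Submission
  imports Defs "HOL-Real_Asymp.Real_Asymp"
begin

(* Put E = midpoint B C - A and D = C - midpoint B C, so that B = A + E - D and C = A + E + D.
  In the affine coordinates A + p E + q D the triangle is |q| <= p <= 1 and the point at distance
  h2 from A on the axis is A + tau E with tau = h2 / h. There the gauge of a E + b D is
  max ((|b| - a) / tau) (a / (1 - tau)), so the edges E - D, 2 D, - E - D have gauges
  1 / (1 - tau), 2 / tau, 2 / tau and pi = (4 / tau + 1 / (1 - tau)) / 2. Being isosceles only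
  matters for identifying h with |E|, as the median is then the altitude. The rest is the
  elementary study of this function of tau, whose excess over 9/2 is
  (2 - 3 tau)^2 / (2 tau (1 - tau)). *)

lemma det2_scaleR_add_eq_0:
  fixes E D :: "real^2"
  assumes det: "E$1 * D$2 - E$2 * D$1 \<noteq> 0" and zero: "a *\<^sub>R E + b *\<^sub>R D = 0"
  shows "a = 0" and "b = 0"
proof -
  have 1: "a * E$1 + b * D$1 = 0" and 2: "a * E$2 + b * D$2 = 0"
    using arg_cong[OF zero, of "\<lambda>v. v$1"] arg_cong[OF zero, of "\<lambda>v. v$2"] by simp_all
  have "a * (E$1 * D$2 - E$2 * D$1) = D$2 * (a * E$1 + b * D$1) - D$1 * (a * E$2 + b * D$2)"
    by algebra
  with 1 2 det show "a = 0" by simp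
  have "b * (E$1 * D$2 - E$2 * D$1) = E$1 * (a * E$2 + b * D$2) - E$2 * (a * E$1 + b * D$1)"
    by algebra
  with 1 2 det show "b = 0" by simp
qed

lemma in_apex_triangle_iff:
  fixes A E D :: "real^2"
  assumes det: "E$1 * D$2 - E$2 * D$1 \<noteq> 0"
  shows "A + a *\<^sub>R E + b *\<^sub>R D \<in> convex hull {A, A + E - D, A + E + D} \<longleftrightarrow> \<bar>b\<bar> \<le> a \<and> a \<le> 1"
proof
  assume "A + a *\<^sub>R E + b *\<^sub>R D \<in> convex hull {A, A + E - D, A + E + D}"
  then obtain u v where uv: "0 \<le> u" "0 \<le> v" "u + v \<le> 1"
    and eq: "A + a *\<^sub>R E + b *\<^sub>R D = A + u *\<^sub>R (E - D) + v *\<^sub>R (E + D)"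
    unfolding convex_hull_3_alt by auto
  have "(a - (u + v)) *\<^sub>R E + (b - (v - u)) *\<^sub>R D = 0"
    using eq by (simp add: algebra_simps)
  then have "a = u + v" "b = v - u"
    using det2_scaleR_add_eq_0[OF det] by fastforce+
  then show "\<bar>b\<bar> \<le> a \<and> a \<le> 1" using uv by auto
next
  assume ab: "\<bar>b\<bar> \<le> a \<and> a \<le> 1"
  define u v where "u = (a - b) / 2" and "v = (a + b) / 2"
  have "A + u *\<^sub>R (A + E - D - A) + v *\<^sub>R (A + E + D - A) = A + (u + v) *\<^sub>R E + (v - u) *\<^sub>R D"
    by (simp add: algebra_simps)
  also have "\<dots> = A + a *\<^sub>R E + b *\<^sub>R D"
    by (simp add: u_def v_def field_simps)
  finally have "A + a *\<^sub>R E + b *\<^sub>R D = A + u *\<^sub>R (A + E - D - A) + v *\<^sub>R (A + E + D - A)" ..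
  moreover have "0 \<le> u" "0 \<le> v" "u + v \<le> 1"
    using ab by (auto simp: u_def v_def field_simps)
  ultimately show "A + a *\<^sub>R E + b *\<^sub>R D \<in> convex hull {A, A + E - D, A + E + D}"
    unfolding convex_hull_3_alt by blast
qed

lemma gauge_fun_eqI:
  assumes "c > 0" and scaled_mem: "\<And>\<xi>. \<xi> > 0 \<Longrightarrow> x0 + (1 / \<xi>) *\<^sub>R x \<in> B \<longleftrightarrow> c \<le> \<xi>"
  shows "gauge_fun B x0 x = c"
proof -
  have "x \<in> (\<lambda>y. \<xi> *\<^sub>R (y - x0)) ` B \<longleftrightarrow> x0 + (1 / \<xi>) *\<^sub>R x \<in> B" if pos: "\<xi> > 0" for \<xi>
  proof -
    have "x = \<xi> *\<^sub>R (y - x0) \<longleftrightarrow> y = x0 + (1 / \<xi>) *\<^sub>R x" for y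
      using pos by auto
    with pos show ?thesis by auto
  qed
  then have "{\<xi>. \<xi> > 0 \<and> x \<in> (\<lambda>y. \<xi> *\<^sub>R (y - x0)) ` B} = {c..}"
    using scaled_mem \<open>c > 0\<close> by force
  then show ?thesis unfolding gauge_fun_def by simp
qed

lemma gauge_fun_apex_triangle:
  fixes A E D :: "real^2"
  assumes det: "E$1 * D$2 - E$2 * D$1 \<noteq> 0" and \<tau>: "0 < \<tau>" "\<tau> < 1"
    and x: "x = a *\<^sub>R E + b *\<^sub>R D" and ab: "a \<noteq> 0 \<or> b \<noteq> 0"
  shows "gauge_fun (convex hull {A, A + E - D, A + E + D}) (A + \<tau> *\<^sub>R E) x
    = max ((\<bar>b\<bar> - a) / \<tau>) (a / (1 - \<tau>))"
proof (rule gauge_fun_eqI)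
  show "max ((\<bar>b\<bar> - a) / \<tau>) (a / (1 - \<tau>)) > 0"
  proof (cases "a > 0")
    case False
    with ab have "\<bar>b\<bar> - a > 0" by auto
    with \<tau> show ?thesis by (simp add: less_max_iff_disj)
  qed (use \<tau> in \<open>simp add: less_max_iff_disj\<close>)
  fix \<xi> :: real assume \<xi>: "\<xi> > 0"
  have "\<bar>b / \<xi>\<bar> = \<bar>b\<bar> / \<xi>" and shift: "\<tau> + a / \<xi> = (\<xi> * \<tau> + a) / \<xi>"
    using \<xi> by (simp_all add: field_simps)
  then have "\<bar>b / \<xi>\<bar> \<le> \<tau> + a / \<xi> \<longleftrightarrow> \<bar>b\<bar> - a \<le> \<xi> * \<tau>"
    using \<xi> by (simp add: divide_le_cancel diff_le_eq)
  also have "\<dots> \<longleftrightarrow> (\<bar>b\<bar> - a) / \<tau> \<le> \<xi>"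
    using \<tau> by (simp add: pos_divide_le_eq)
  finally have side: "\<bar>b / \<xi>\<bar> \<le> \<tau> + a / \<xi> \<longleftrightarrow> (\<bar>b\<bar> - a) / \<tau> \<le> \<xi>" .
  have "\<tau> + a / \<xi> \<le> 1 \<longleftrightarrow> a \<le> \<xi> * (1 - \<tau>)"
    using \<xi> by (simp add: shift pos_divide_le_eq algebra_simps)
  also have "\<dots> \<longleftrightarrow> a / (1 - \<tau>) \<le> \<xi>"
    using \<tau> by (simp add: pos_divide_le_eq)
  finally have base: "\<tau> + a / \<xi> \<le> 1 \<longleftrightarrow> a / (1 - \<tau>) \<le> \<xi>" .
  have point: "A + \<tau> *\<^sub>R E + (1 / \<xi>) *\<^sub>R x = A + (\<tau> + a / \<xi>) *\<^sub>R E + (b / \<xi>) *\<^sub>R D"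
    unfolding x by (simp add: algebra_simps)
  show "A + \<tau> *\<^sub>R E + (1 / \<xi>) *\<^sub>R x \<in> convex hull {A, A + E - D, A + E + D}
      \<longleftrightarrow> max ((\<bar>b\<bar> - a) / \<tau>) (a / (1 - \<tau>)) \<le> \<xi>"
    unfolding point in_apex_triangle_iff[OF det] max.bounded_iff side base ..
qed

lemma polygon_pi_triangle:
  "polygon_pi K x0 (tri_vertices a b c) 3
    = (gauge_fun K x0 (b - a) + gauge_fun K x0 (c - b) + gauge_fun K x0 (a - c)) / 2"
proof -
  have "{1..3::nat} = {1, 2, 3}" by auto
  then show ?thesis by (simp add: polygon_pi_def tri_vertices_def)
qed

lemma polygon_pi_apex_triangle:
  fixes A E D :: "real^2"
  assumes det: "E$1 * D$2 - E$2 * D$1 \<noteq> 0" and \<tau>: "0 < \<tau>" "\<tau> < 1"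
  shows "polygon_pi (convex hull {A, A + E - D, A + E + D}) (A + \<tau> *\<^sub>R E)
      (tri_vertices A (A + E - D) (A + E + D)) 3 = (4 / \<tau> + 1 / (1 - \<tau>)) / 2"
proof -
  have "(A + E - D) - A = 1 *\<^sub>R E + (-1) *\<^sub>R D"
    and "(A + E + D) - (A + E - D) = 0 *\<^sub>R E + 2 *\<^sub>R D"
    and "A - (A + E + D) = (-1) *\<^sub>R E + (-1) *\<^sub>R D"
    by (simp_all add: vec_eq_iff)
  note gauges = this[THEN gauge_fun_apex_triangle[OF det \<tau>]]
  have "gauge_fun (convex hull {A, A + E - D, A + E + D}) (A + \<tau> *\<^sub>R E) ((A + E - D) - A) = 1 / (1 - \<tau>)"
    and "gauge_fun (convex hull {A, A + E - D, A + E + D}) (A + \<tau> *\<^sub>R E) ((A + E + D) - (A + E - D)) = 2 / \<tau>"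
    and "gauge_fun (convex hull {A, A + E - D, A + E + D}) (A + \<tau> *\<^sub>R E) (A - (A + E + D)) = 2 / \<tau>"
    using gauges \<tau> by (simp_all add: max_def field_simps)
  then show ?thesis
    unfolding polygon_pi_triangle by simp
qed

lemma infdist_closed_segment_orthogonal:
  fixes A E D :: "'a::real_inner"
  assumes orth: "orthogonal E D"
  shows "infdist A (closed_segment (A + E - D) (A + E + D)) = norm E"
proof (rule antisym)
  have "midpoint (A + E - D) (A + E + D) = A + E"
    by (simp add: midpoint_def algebra_simps flip: scaleR_2)
  then have "A + E \<in> closed_segment (A + E - D) (A + E + D)"
    by (metis midpoint_in_closed_segment)
  then show "infdist A (closed_segment (A + E - D) (A + E + D)) \<le> norm E"
    using infdist_le[of "A + E" _ A] by (simp add: dist_norm)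
next
  have "norm E \<le> dist A y" if y: "y \<in> closed_segment (A + E - D) (A + E + D)" for y
  proof -
    obtain u where u: "y = (1 - u) *\<^sub>R (A + E - D) + u *\<^sub>R (A + E + D)"
      using y by (auto simp: in_segment)
    have "dist A y = norm (E + (2 * u - 1) *\<^sub>R D)"
      unfolding u by (simp add: dist_norm norm_minus_commute algebra_simps flip: scaleR_2)
    moreover have "(norm E)\<^sup>2 \<le> (norm (E + (2 * u - 1) *\<^sub>R D))\<^sup>2"
      using norm_add_Pythagorean[OF orthogonal_clauses(2)[OF orth]] by simp
    ultimately show ?thesis
      by (metis power2_le_imp_le norm_ge_zero)
  qed
  then show "norm E \<le> infdist A (closed_segment (A + E - D) (A + E + D))"
    by (simp add: infdist_notempty cINF_greatest)
qed

lemma closed_segment_eq_by_dist: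
  fixes a b x :: "'a::real_normed_vector"
  assumes x: "x \<in> closed_segment a b" and "a \<noteq> b"
  shows "x = a + (dist a x / dist a b) *\<^sub>R (b - a)"
proof -
  obtain u where u: "0 \<le> u" "x = a + u *\<^sub>R (b - a)"
    using x by (auto simp: in_segment algebra_simps)
  then have "dist a x = u * dist a b"
    by (simp add: dist_norm norm_minus_commute)
  with u \<open>a \<noteq> b\<close> show ?thesis
    by simp
qed

lemma orient_apex_triangle:
  "orient A (A + E - D) (A + E + D) = 2 * (E$1 * D$2 - E$2 * D$1)"
  by (simp add: orient_def algebra_simps)

lemma isosceles_apex_frame:
  fixes A B C :: "real^2"
  assumes "dist A B = dist A C"
  defines "E \<equiv> midpoint B C - A" and "D \<equiv> C - midpoint B C"
  shows "B = A + E - D" and "C = A + E + D" and "orthogonal E D"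
proof -
  show B: "B = A + E - D" and C: "C = A + E + D"
    by (simp_all add: E_def D_def midpoint_def vec_eq_iff field_simps)
  have "norm (E - D) = norm (E + D)"
    using assms(1) by (simp add: B C dist_norm norm_minus_commute algebra_simps)
  then have "inner (E - D) (E - D) = inner (E + D) (E + D)"
    by (simp add: dot_square_norm)
  then show "orthogonal E D"
    by (simp add: orthogonal_def algebra_simps inner_commute)
qed

definition axis_pi :: "real \<Rightarrow> real \<Rightarrow> real" where
  "axis_pi h t = (1/2) * (4 * h / t + h / (h - t))"

lemma axis_pi_diff:
  assumes "0 < s" "s < h" "0 < t" "t < h"
  shows "axis_pi h s - axis_pi h t = (1/2) * (4 * h * (t - s) / (s * t) - h * (t - s) / ((h - s) * (h - t)))"
proof -
  have "4 * h / s - 4 * h / t = 4 * h * (t - s) / (s * t)"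
    and "h / (h - t) - h / (h - s) = h * (t - s) / ((h - s) * (h - t))"
    using assms by (simp_all add: field_simps)
  moreover have "axis_pi h s - axis_pi h t = (1/2) * ((4 * h / s - 4 * h / t) - (h / (h - t) - h / (h - s)))"
    unfolding axis_pi_def by (simp only: algebra_simps)
  ultimately show ?thesis
    by simp
qed

lemma axis_pi_strict_antimono:
  assumes "0 < s" "s < t" "t < 2 * h / 3"
  shows "axis_pi h t < axis_pi h s"
proof -
  have "s * t < (2 * (h - s)) * (2 * (h - t))"
    using assms by (intro mult_strict_mono) auto
  then have "s * t < 4 * ((h - s) * (h - t))"
    by (simp add: algebra_simps)
  moreover have "0 < s * t" "0 < 4 * ((h - s) * (h - t))"
    using assms by auto
  ultimately have "4 * h * (t - s) / (4 * ((h - s) * (h - t))) < 4 * h * (t - s) / (s * t)"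
    using assms by (intro divide_strict_left_mono mult_pos_pos) auto
  then show ?thesis
    using assms axis_pi_diff[of s h t] by simp
qed

lemma axis_pi_strict_mono:
  assumes "2 * h / 3 < s" "s < t" "t < h"
  shows "axis_pi h s < axis_pi h t"
proof -
  have "(2 * (h - s)) * (2 * (h - t)) < s * t"
    using assms by (intro mult_strict_mono) auto
  then have "4 * ((h - s) * (h - t)) < s * t"
    by (simp add: algebra_simps)
  moreover have "0 < s * t" "0 < 4 * ((h - s) * (h - t))"
    using assms by auto
  ultimately have "4 * h * (t - s) / (s * t) < 4 * h * (t - s) / (4 * ((h - s) * (h - t)))"
    using assms by (intro divide_strict_left_mono mult_pos_pos) auto
  then show ?thesis
    using assms axis_pi_diff[of s h t] by simp
qed

lemma axis_pi_minus_min: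
  assumes "0 < t" "t < h"
  shows "axis_pi h t - 9 / 2 = (2 * h - 3 * t)\<^sup>2 / (2 * t * (h - t))"
  using assms by (simp add: axis_pi_def field_simps power2_eq_square)

lemma axis_pi_ge_min:
  assumes "0 < t" "t < h"
  shows "9 / 2 \<le> axis_pi h t"
proof -
  have "0 \<le> (2 * h - 3 * t)\<^sup>2 / (2 * t * (h - t))"
    using assms by simp
  then show ?thesis
    using axis_pi_minus_min[OF assms] by linarith
qed

lemma axis_pi_eq_min_iff:
  assumes "0 < t" "t < h"
  shows "axis_pi h t = 9 / 2 \<longleftrightarrow> t = 2 * h / 3"
proof -
  have "axis_pi h t = 9 / 2 \<longleftrightarrow> (2 * h - 3 * t)\<^sup>2 / (2 * t * (h - t)) = 0"
    using axis_pi_minus_min[OF assms] by linarith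
  also have "\<dots> \<longleftrightarrow> t = 2 * h / 3"
    using assms by auto
  finally show ?thesis .
qed

lemma axis_pi_at_right_0: "h > 0 \<Longrightarrow> filterlim (axis_pi h) at_top (at_right 0)"
  unfolding axis_pi_def by real_asymp

lemma axis_pi_at_left: "h > 0 \<Longrightarrow> filterlim (axis_pi h) at_top (at_left h)"
  unfolding axis_pi_def by real_asymp

lemma isosceles_height:
  fixes A B C :: "real^2"
  assumes ccw: "orient A B C > 0" and isosceles: "dist A B = dist A C"
    and height: "h = infdist A (closed_segment B C)"
  shows "h = dist A (midpoint B C)" and "0 < h"
proof -
  define E D where "E = midpoint B C - A" and "D = C - midpoint B C"
  note frame = isosceles_apex_frame[OF isosceles, folded E_def D_def]
  have "h = norm E"
    using height infdist_closed_segment_orthogonal[OF frame(3)] by (simp add: frame(1,2))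
  then show "h = dist A (midpoint B C)"
    by (simp add: E_def dist_norm norm_minus_commute)
  have "E \<noteq> 0"
    using ccw orient_apex_triangle[of A E D] by (auto simp: frame(1,2))
  with \<open>h = norm E\<close> show "0 < h"
    by simp
qed

lemma polygon_pi_isosceles_axis:
  fixes A B C :: "real^2"
  assumes ccw: "orient A B C > 0" and isosceles: "dist A B = dist A C"
    and height: "h = infdist A (closed_segment B C)" and t: "0 < t" "t < h"
  shows "polygon_pi (convex hull {A, B, C}) (A + (t / h) *\<^sub>R (midpoint B C - A)) (tri_vertices A B C) 3
    = axis_pi h t"
proof -
  define E D where "E = midpoint B C - A" and "D = C - midpoint B C"
  note frame = isosceles_apex_frame[OF isosceles, folded E_def D_def]
  have det: "E$1 * D$2 - E$2 * D$1 \<noteq> 0"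
    using ccw orient_apex_triangle[of A E D] by (simp add: frame(1,2))
  have "0 < t / h" "t / h < 1"
    using t by simp_all
  from polygon_pi_apex_triangle[OF det this, of A]
  have "polygon_pi (convex hull {A, B, C}) (A + (t / h) *\<^sub>R E) (tri_vertices A B C) 3
      = (4 / (t / h) + 1 / (1 - t / h)) / 2"
    by (simp add: frame(1,2))
  also have "\<dots> = axis_pi h t"
    using t by (simp add: axis_pi_def field_simps)
  finally show ?thesis
    by (simp add: E_def)
qed

theorem mainTheorem9:
  fixes A B C :: "real^2" and h :: real
  assumes ccw: "orient A B C > 0"
    and isosceles: "dist A B = dist A C"
    and height: "h = infdist A (closed_segment B C)"
  defines "T \<equiv> convex hull {A, B, C}"
    and "\<Phi> \<equiv> (\<lambda>t. polygon_pi (convex hull {A, B, C}) (A + (t / h) *\<^sub>R (midpoint B C - A)) (tri_vertices A B C) 3)"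
  shows "(\<forall>h2 x0. 0 < h2 \<and> h2 < h \<and> x0 \<in> closed_segment A (midpoint B C) \<and> dist A x0 = h2 \<longrightarrow>
            polygon_pi T x0 (tri_vertices A B C) 3 = (1/2) * (4 * h / h2 + h / (h - h2)))
      \<and> filterlim \<Phi> at_top (at_right 0)
      \<and> filterlim \<Phi> at_top (at_left h)
      \<and> (\<forall>s t. 0 < s \<and> s < t \<and> t < 2 * h / 3 \<longrightarrow> \<Phi> t < \<Phi> s)
      \<and> (\<forall>s t. 2 * h / 3 < s \<and> s < t \<and> t < h \<longrightarrow> \<Phi> s < \<Phi> t)
      \<and> \<Phi> (2 * h / 3) = 9 / 2
      \<and> (\<forall>t. 0 < t \<and> t < h \<longrightarrow> 9 / 2 \<le> \<Phi> t \<and> (\<Phi> t = 9 / 2 \<longrightarrow> t = 2 * h / 3))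
      \<and> A + ((2 * h / 3) / h) *\<^sub>R (midpoint B C - A) = (1/3) *\<^sub>R (A + B + C)"
proof -
  have h: "h = dist A (midpoint B C)" "0 < h"
    using isosceles_height[OF ccw isosceles height] by simp_all
  have \<Phi>: "\<Phi> t = axis_pi h t" if "0 < t" "t < h" for t
    unfolding \<Phi>_def using polygon_pi_isosceles_axis[OF ccw isosceles height that] .
  have "polygon_pi T x0 (tri_vertices A B C) 3 = (1/2) * (4 * h / h2 + h / (h - h2))"
    if "0 < h2" "h2 < h" "x0 \<in> closed_segment A (midpoint B C)" "dist A x0 = h2" for h2 x0
  proof -
    have "x0 = A + (h2 / h) *\<^sub>R (midpoint B C - A)"
      using closed_segment_eq_by_dist[OF that(3)] h that(4) by fastforce
    then show ?thesis
      using \<Phi>[OF that(1,2)] by (simp add: T_def \<Phi>_def axis_pi_def)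
  qed
  moreover have "filterlim \<Phi> at_top (at_right 0)" "filterlim \<Phi> at_top (at_left h)"
  proof -
    have "\<forall>\<^sub>F t in at_right 0. axis_pi h t = \<Phi> t" "\<forall>\<^sub>F t in at_left h. axis_pi h t = \<Phi> t"
      using \<Phi> h(2) by (auto intro!: eventually_at_rightI[of 0 h] eventually_at_leftI[of 0 h])
    then show "filterlim \<Phi> at_top (at_right 0)" "filterlim \<Phi> at_top (at_left h)"
      using axis_pi_at_right_0[OF h(2)] axis_pi_at_left[OF h(2)] filterlim_cong by blast+
  qed
  moreover have "\<Phi> t < \<Phi> s" if "0 < s" "s < t" "t < 2 * h / 3" for s t
    using that h(2) \<Phi>[of s] \<Phi>[of t] axis_pi_strict_antimono[OF that] by simp
  moreover have "\<Phi> s < \<Phi> t" if "2 * h / 3 < s" "s < t" "t < h" for s t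
    using that h(2) \<Phi>[of s] \<Phi>[of t] axis_pi_strict_mono[OF that] by simp
  moreover have "9 / 2 \<le> \<Phi> t" and "\<Phi> t = 9 / 2 \<longleftrightarrow> t = 2 * h / 3" if "0 < t" "t < h" for t
    using \<Phi>[OF that] axis_pi_ge_min[OF that] axis_pi_eq_min_iff[OF that] by simp_all
  moreover have "\<Phi> (2 * h / 3) = 9 / 2"
    using \<Phi>[of "2 * h / 3"] axis_pi_eq_min_iff[of "2 * h / 3" h] h(2) by simp
  moreover have "A + ((2 * h / 3) / h) *\<^sub>R (midpoint B C - A) = (1/3) *\<^sub>R (A + B + C)"
    using h(2) by (simp add: vec_eq_iff midpoint_def field_simps)
  ultimately show ?thesis
    by blast
qed

end
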